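(* Let $\phi:\mathbb R_{\ge0}\times X\to X$ be a continuous semiflow on a metric space $(X,d)$, let $K\subset X$ be compact and $\alpha\ge0$. Assume there is $L>0$ such that $d(\phi_t(x),\phi_t(y))\le L\,d(x,y)$ for all $x,y\in\bigcup_{s\ge0}\phi_s(K)$ and all $t\in[0,1]$. Then \[ h_{\mathrm{est}}(\alpha,K;\phi)=\ln(2)\cdot h_{\mathrm{est}}(\alpha,K;\phi_1). \]
   Context: For a continuous-time system $\phi$, a set $S\subset K$ is $(T,\varepsilon,\alpha,K)$-spanning ($T>0$ real) if for each $x\in K$ there is $y\in S$ with $d(\phi_t(x),\phi_t(y))<\varepsilon e^{-\alpha t}$ for all $t\in[0,T]$, and $h_{\mathrm{est}}(\alpha,K;\phi)=\lim_{\varepsilon\downarrow0}\limsup_{T\to\infty}\frac1T\ln s^*_{\mathrm{est}}(T,\varepsilon,\alpha,K;\phi)$, with $s^*_{\mathrm{est}}$ the minimal cardinality of such a set (natural logarithm). For the discrete-time system generated by the time-1 map $\phi_1$ (iterates $\phi_1^t=\phi_t$, $t\in\mathbb Z_{\ge0}$), the same definition is used with $T\in\mathbb Z_{>0}$, $t\in\{0,1,\ldots,T\}$, and $\log_2$ in place of $\ln$, giving $h_{\mathrm{est}}(\alpha,K;\phi_1)$. *)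

theory Defs
  imports "HOL-Analysis.Analysis"
begin

definition continuous_semiflow :: "(real \<Rightarrow> 'a::metric_space \<Rightarrow> 'a) \<Rightarrow> bool" where
  "continuous_semiflow \<phi> \<longleftrightarrow>
     (\<forall>x. \<phi> 0 x = x) \<and>
     (\<forall>s t x. 0 \<le> s \<longrightarrow> 0 \<le> t \<longrightarrow> \<phi> (s + t) x = \<phi> t (\<phi> s x)) \<and>
     continuous_on ({0..} \<times> UNIV) (\<lambda>(t, x). \<phi> t x)"

definition est_spanning_cont ::
  "(real \<Rightarrow> 'a::metric_space \<Rightarrow> 'a) \<Rightarrow> real \<Rightarrow> real \<Rightarrow> real \<Rightarrow> 'a set \<Rightarrow> 'a set \<Rightarrow> bool" where
  "est_spanning_cont \<phi> T \<epsilon> \<alpha> K S \<longleftrightarrow> S \<subseteq> K \<and>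
     (\<forall>x\<in>K. \<exists>y\<in>S. \<forall>t\<in>{0..T}. dist (\<phi> t x) (\<phi> t y) < \<epsilon> * exp (- \<alpha> * t))"

definition s_est_cont ::
  "(real \<Rightarrow> 'a::metric_space \<Rightarrow> 'a) \<Rightarrow> real \<Rightarrow> real \<Rightarrow> real \<Rightarrow> 'a set \<Rightarrow> nat" where
  "s_est_cont \<phi> T \<epsilon> \<alpha> K = Inf {card S | S. finite S \<and> est_spanning_cont \<phi> T \<epsilon> \<alpha> K S}"

definition h_est_cont :: "real \<Rightarrow> 'a set \<Rightarrow> (real \<Rightarrow> 'a::metric_space \<Rightarrow> 'a) \<Rightarrow> ereal" where
  "h_est_cont \<alpha> K \<phi> = Lim (at_right (0::real))
     (\<lambda>\<epsilon>. Limsup at_top (\<lambda>T::real. ereal ((1 / T) * ln (real (s_est_cont \<phi> T \<epsilon> \<alpha> K)))))"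

definition est_spanning_disc ::
  "('a::metric_space \<Rightarrow> 'a) \<Rightarrow> nat \<Rightarrow> real \<Rightarrow> real \<Rightarrow> 'a set \<Rightarrow> 'a set \<Rightarrow> bool" where
  "est_spanning_disc f T \<epsilon> \<alpha> K S \<longleftrightarrow> S \<subseteq> K \<and>
     (\<forall>x\<in>K. \<exists>y\<in>S. \<forall>t\<in>{0..T}. dist ((f ^^ t) x) ((f ^^ t) y) < \<epsilon> * exp (- \<alpha> * real t))"

definition s_est_disc ::
  "('a::metric_space \<Rightarrow> 'a) \<Rightarrow> nat \<Rightarrow> real \<Rightarrow> real \<Rightarrow> 'a set \<Rightarrow> nat" where
  "s_est_disc f T \<epsilon> \<alpha> K = Inf {card S | S. finite S \<and> est_spanning_disc f T \<epsilon> \<alpha> K S}"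

definition h_est_disc :: "real \<Rightarrow> 'a set \<Rightarrow> ('a::metric_space \<Rightarrow> 'a) \<Rightarrow> ereal" where
  "h_est_disc \<alpha> K f = Lim (at_right (0::real))
     (\<lambda>\<epsilon>. Limsup sequentially (\<lambda>T::nat. ereal ((1 / real T) * log 2 (real (s_est_disc f T \<epsilon> \<alpha> K)))))"

end

theory Submission imports Defs begin

text \<open>A continuous-time spanning set is spanning for the time-1 map at the integer times, with the
  same \<open>\<epsilon>\<close>. Conversely, a spanning set for the time-1 map controls every real time \<open>t\<close> through
  the preceding integer time \<open>\<lfloor>t\<rfloor>\<close>, at the cost of the Lipschitz constant \<open>L\<close> of the flow on
  \<open>[0,1]\<close> and a factor \<open>e\<^sup>\<alpha>\<close> from the exponential rate; so \<open>\<epsilon>\<close> only gets multiplied by the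
  constant \<open>L e\<^sup>\<alpha>\<close>. Hence for each \<open>\<epsilon>\<close> the continuous-time growth rate is squeezed between
  the discrete one (converted from \<open>log\<^sub>2\<close> to \<open>ln\<close>) at \<open>\<epsilon>\<close> and at \<open>\<epsilon> / (L e\<^sup>\<alpha>)\<close>, and both
  bounds have the same limit as \<open>\<epsilon> \<rightarrow> 0\<close> because the discrete rate is monotone in \<open>\<epsilon>\<close>.\<close>

lemma Limsup_compose_filterlim_le:
  assumes "filterlim h G F"
  shows "Limsup F (\<lambda>x. g (h x)) \<le> Limsup G (g :: _ \<Rightarrow> 'b::complete_linorder)"
proof -
  have "Limsup F (\<lambda>x. g (h x)) \<le> Limsup (filtermap h F) g" by (rule Limsup_filtermap_ge)
  also have "\<dots> \<le> Limsup G g" using assms unfolding filterlim_def Limsup_def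
    by (intro INF_superset_mono) (auto simp: le_filter_def)
  finally show ?thesis .
qed

lemma Limsup_ln_eq_ln2_mult_Limsup_log2:
  assumes "F \<noteq> bot"
  shows "Limsup F (\<lambda>x. ereal (c x * ln (g x))) = ereal (ln 2) * Limsup F (\<lambda>x. ereal (c x * log 2 (g x)))"
proof -
  have "ereal (ln 2) * Limsup F (\<lambda>x. ereal (c x * log 2 (g x)))
      = Limsup F (\<lambda>x. ereal (ln 2) * ereal (c x * log 2 (g x)))"
    by (rule Limsup_ereal_mult_left[symmetric]) (use assms in auto)
  also have "\<dots> = Limsup F (\<lambda>x. ereal (c x * ln (g x)))"
    by (simp add: log_def)
  finally show ?thesis ..
qed

lemma tendsto_at_right_antimono_SUP:
  fixes f :: "real \<Rightarrow> 'b::{complete_linorder, linorder_topology}"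
  assumes antimono: "\<And>u v. a < u \<Longrightarrow> u \<le> v \<Longrightarrow> f v \<le> f u"
  shows "(f \<longlongrightarrow> (SUP u\<in>{a<..}. f u)) (at_right a)"
proof (rule order_tendstoI)
  fix y assume "y < (SUP u\<in>{a<..}. f u)"
  then obtain u where u: "a < u" "y < f u" by (auto simp: less_SUP_iff)
  show "eventually (\<lambda>v. y < f v) (at_right a)"
    unfolding eventually_at_right_field
    using u by (intro exI[of _ u]) (auto intro: less_le_trans[OF _ antimono])
next
  fix y assume "(SUP u\<in>{a<..}. f u) < y"
  moreover have "eventually (\<lambda>v. f v \<le> (SUP u\<in>{a<..}. f u)) (at_right a)"
    by (auto simp: eventually_at_right_field intro!: exI[of _ "a + 1"] SUP_upper)
  ultimately show "eventually (\<lambda>v. f v < y) (at_right a)"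
    by (auto elim: eventually_mono)
qed

lemma tendsto_at_right_0_rescaled_sandwich:
  fixes f g :: "real \<Rightarrow> 'b::linorder_topology"
  assumes g: "(g \<longlongrightarrow> l) (at_right 0)" and C: "C > 0"
    and lower: "\<And>\<epsilon>. 0 < \<epsilon> \<Longrightarrow> g \<epsilon> \<le> f \<epsilon>" and upper: "\<And>\<epsilon>. 0 < \<epsilon> \<Longrightarrow> f \<epsilon> \<le> g (\<epsilon> / C)"
  shows "(f \<longlongrightarrow> l) (at_right 0)"
proof -
  have pos: "eventually (\<lambda>\<epsilon>::real. 0 < \<epsilon>) (at_right 0)"
    by (simp add: eventually_at_filter)
  have "filterlim (\<lambda>\<epsilon>. \<epsilon> / C) (at_right 0) (at_right 0)"
    unfolding filterlim_at
  proof
    show "eventually (\<lambda>\<epsilon>. \<epsilon> / C \<in> {0<..} \<and> \<epsilon> / C \<noteq> 0) (at_right 0)"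
      using pos by (rule eventually_mono) (use C in auto)
    have "((\<lambda>\<epsilon>::real. \<epsilon> / C) \<longlongrightarrow> 0 / C) (at_right 0)"
      by (intro tendsto_intros) (use C in auto)
    then show "((\<lambda>\<epsilon>::real. \<epsilon> / C) \<longlongrightarrow> 0) (at_right 0)" by simp
  qed
  then have "((\<lambda>\<epsilon>. g (\<epsilon> / C)) \<longlongrightarrow> l) (at_right 0)"
    by (rule filterlim_compose[OF g])
  with g show ?thesis
    by (intro tendsto_sandwich[of g f _ "\<lambda>\<epsilon>. g (\<epsilon> / C)"])
       (use pos in \<open>auto elim: eventually_mono intro: lower upper\<close>)
qed

lemma Inf_card_mono:
  assumes "\<And>S. P S \<Longrightarrow> Q S" "\<exists>S. finite S \<and> P S"
  shows "Inf {card S |S. finite S \<and> Q S} \<le> Inf {card S |S. finite S \<and> P S}"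
proof -
  have "Inf {card S |S. finite S \<and> P S} \<in> {card S |S. finite S \<and> P S}"
    using assms(2) by (intro Inf_nat_def1) auto
  then obtain S where S: "finite S" "P S" "Inf {card S |S. finite S \<and> P S} = card S" by auto
  then have "card S \<in> {card S |S. finite S \<and> Q S}" using assms(1) by auto
  then show ?thesis using S(3) by (simp add: cInf_lower)
qed

lemma ln_of_nat_nonneg: "0 \<le> ln (real (n::nat))"
  by (cases "n = 0") auto

lemma ln_of_nat_mono: "(m::nat) \<le> n \<Longrightarrow> ln (real m) \<le> ln (real n)"
  using ln_of_nat_nonneg[of n] by (cases "m = 0") auto

lemma continuous_on_funpow:
  fixes f :: "'a::topological_space \<Rightarrow> 'a"
  shows "continuous_on UNIV f \<Longrightarrow> continuous_on UNIV (f ^^ k)"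
proof (induction k)
  case (Suc k)
  then show ?case
    using continuous_on_compose2[OF Suc.prems Suc.IH[OF Suc.prems]] by simp
qed (simp add: continuous_on_id)

lemma est_spanning_disc_finite_exists:
  assumes f: "continuous_on UNIV f" and K: "compact K" and \<epsilon>: "\<epsilon> > 0"
  shows "\<exists>S. finite S \<and> est_spanning_disc f n \<epsilon> \<alpha> K S"
proof -
  define V where "V x = (\<Inter>k\<in>{0..n}. (f ^^ k) -` ball ((f ^^ k) x) (\<epsilon> * exp (- \<alpha> * real k)))" for x
  have "open (V x)" for x
    unfolding V_def by (intro open_INT finite_atLeastAtMost ballI open_vimage open_ball
        continuous_on_funpow f)
  moreover have "K \<subseteq> (\<Union>x\<in>K. V x)" using \<epsilon> by (auto simp: V_def)
  ultimately obtain S where S: "S \<subseteq> K" "finite S" "K \<subseteq> (\<Union>y\<in>S. V y)"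
    using compactE_image[OF K] by metis
  then have "est_spanning_disc f n \<epsilon> \<alpha> K S"
    by (fastforce simp: est_spanning_disc_def V_def dist_commute)
  then show ?thesis using S(2) by blast
qed

lemma s_est_disc_antimono:
  assumes f: "continuous_on UNIV f" and K: "compact K" and \<epsilon>: "0 < \<epsilon>1" "\<epsilon>1 \<le> \<epsilon>2"
  shows "s_est_disc f n \<epsilon>2 \<alpha> K \<le> s_est_disc f n \<epsilon>1 \<alpha> K"
  unfolding s_est_disc_def
proof (intro Inf_card_mono est_spanning_disc_finite_exists[OF f K \<epsilon>(1)])
  fix S assume "est_spanning_disc f n \<epsilon>1 \<alpha> K S"
  then show "est_spanning_disc f n \<epsilon>2 \<alpha> K S"
    unfolding est_spanning_disc_def
    using \<epsilon> by (fastforce intro: order.strict_trans2 mult_right_mono)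
qed

lemma continuous_semiflow_funpow:
  assumes "continuous_semiflow \<phi>"
  shows "(\<phi> 1 ^^ k) x = \<phi> (real k) x"
proof (induction k)
  case 0
  then show ?case using assms by (simp add: continuous_semiflow_def)
next
  case (Suc k)
  have "\<phi> (real k + 1) x = \<phi> 1 (\<phi> (real k) x)"
    using assms unfolding continuous_semiflow_def by simp
  with Suc show ?case by (simp add: add.commute)
qed

lemma continuous_semiflow_continuous_on:
  assumes "continuous_semiflow \<phi>" "0 \<le> t"
  shows "continuous_on UNIV (\<phi> t)"
proof -
  have "continuous_on ({0..} \<times> UNIV) (\<lambda>(t, x). \<phi> t x)"
    using assms(1) by (simp add: continuous_semiflow_def)
  then have "continuous_on UNIV ((\<lambda>(t, x). \<phi> t x) \<circ> Pair t)"
    using assms(2) by (intro continuous_on_compose continuous_intros)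
      (auto elim: continuous_on_subset)
  then show ?thesis by (simp add: o_def)
qed

lemma est_spanning_cont_imp_disc:
  assumes "continuous_semiflow \<phi>" "est_spanning_cont \<phi> T \<epsilon> \<alpha> K S" "real n \<le> T"
  shows "est_spanning_disc (\<phi> 1) n \<epsilon> \<alpha> K S"
  using assms unfolding est_spanning_cont_def est_spanning_disc_def
  by (fastforce simp: continuous_semiflow_funpow)

lemma exp_rate_floor_le:
  assumes "0 \<le> \<alpha>" "0 \<le> t"
  shows "exp (- \<alpha> * real (nat \<lfloor>t\<rfloor>)) \<le> exp \<alpha> * exp (- \<alpha> * t)"
proof -
  have "\<alpha> * t \<le> \<alpha> * (real (nat \<lfloor>t\<rfloor>) + 1)"
    using assms by (intro mult_left_mono) linarith+
  then show ?thesis by (simp add: exp_add[symmetric] algebra_simps)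
qed

definition est_rate_cont :: "(real \<Rightarrow> 'a::metric_space \<Rightarrow> 'a) \<Rightarrow> real \<Rightarrow> 'a set \<Rightarrow> real \<Rightarrow> ereal" where
  "est_rate_cont \<phi> \<alpha> K \<epsilon> = Limsup at_top (\<lambda>T::real. ereal ((1 / T) * ln (real (s_est_cont \<phi> T \<epsilon> \<alpha> K))))"

definition est_rate_disc :: "('a::metric_space \<Rightarrow> 'a) \<Rightarrow> real \<Rightarrow> 'a set \<Rightarrow> real \<Rightarrow> ereal" where
  "est_rate_disc f \<alpha> K \<epsilon> =
     Limsup sequentially (\<lambda>T::nat. ereal ((1 / real T) * log 2 (real (s_est_disc f T \<epsilon> \<alpha> K))))"

lemma est_rate_disc_antimono:
  assumes "continuous_on UNIV f" "compact K" "0 < \<epsilon>1" "\<epsilon>1 \<le> \<epsilon>2"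
  shows "est_rate_disc f \<alpha> K \<epsilon>2 \<le> est_rate_disc f \<alpha> K \<epsilon>1"
  unfolding est_rate_disc_def
proof (intro Limsup_mono always_eventually allI)
  fix n
  have "ln (real (s_est_disc f n \<epsilon>2 \<alpha> K)) \<le> ln (real (s_est_disc f n \<epsilon>1 \<alpha> K))"
    by (intro ln_of_nat_mono s_est_disc_antimono assms)
  then show "ereal (1 / real n * log 2 (real (s_est_disc f n \<epsilon>2 \<alpha> K)))
      \<le> ereal (1 / real n * log 2 (real (s_est_disc f n \<epsilon>1 \<alpha> K)))"
    by (simp add: log_def divide_right_mono mult_left_mono)
qed

locale lipschitz_semiflow_on_orbit =
  fixes \<phi> :: "real \<Rightarrow> 'a::metric_space \<Rightarrow> 'a" and K :: "'a set" and L :: real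
  assumes semiflow: "continuous_semiflow \<phi>"
    and compact: "compact K"
    and L_pos: "L > 0"
    and lipschitz: "\<forall>x\<in>(\<Union>s\<in>{0..}. \<phi> s ` K). \<forall>y\<in>(\<Union>s\<in>{0..}. \<phi> s ` K). \<forall>t\<in>{0..1}.
           dist (\<phi> t x) (\<phi> t y) \<le> L * dist x y"
begin

lemma dist_le_floor_time:
  assumes "x \<in> K" "y \<in> K" "0 \<le> t"
  shows "dist (\<phi> t x) (\<phi> t y) \<le> L * dist (\<phi> (real (nat \<lfloor>t\<rfloor>)) x) (\<phi> (real (nat \<lfloor>t\<rfloor>)) y)"
proof -
  define k where "k = real (nat \<lfloor>t\<rfloor>)"
  have k: "0 \<le> k" "k \<le> t" "t - k \<le> 1" using assms(3) unfolding k_def by linarith+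
  have shift: "\<phi> t z = \<phi> (t - k) (\<phi> k z)" for z
    using semiflow k unfolding continuous_semiflow_def by (metis add.commute diff_add_cancel diff_ge_0_iff_ge)
  show ?thesis
    unfolding shift k_def[symmetric] using lipschitz assms k by auto
qed

lemma est_spanning_disc_imp_cont:
  assumes sp: "est_spanning_disc (\<phi> 1) (nat \<lfloor>T\<rfloor>) \<epsilon> \<alpha> K S" and "0 \<le> \<alpha>"
  shows "est_spanning_cont \<phi> T (L * exp \<alpha> * \<epsilon>) \<alpha> K S"
  unfolding est_spanning_cont_def
proof (intro conjI ballI)
  show "S \<subseteq> K" using sp unfolding est_spanning_disc_def by blast
  fix x assume x: "x \<in> K"
  then obtain y where y: "y \<in> S" and close:
      "\<forall>k\<in>{0..nat \<lfloor>T\<rfloor>}. dist ((\<phi> 1 ^^ k) x) ((\<phi> 1 ^^ k) y) < \<epsilon> * exp (- \<alpha> * real k)"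
    using sp unfolding est_spanning_disc_def by blast
  have "y \<in> K" using sp y unfolding est_spanning_disc_def by blast
  show "\<exists>y\<in>S. \<forall>t\<in>{0..T}. dist (\<phi> t x) (\<phi> t y) < L * exp \<alpha> * \<epsilon> * exp (- \<alpha> * t)"
  proof (intro bexI[OF _ y(1)] ballI)
    fix t assume t: "t \<in> {0..T}"
    have "nat \<lfloor>t\<rfloor> \<in> {0..nat \<lfloor>T\<rfloor>}" using t by (auto intro: nat_mono floor_mono)
    then have d: "dist (\<phi> (real (nat \<lfloor>t\<rfloor>)) x) (\<phi> (real (nat \<lfloor>t\<rfloor>)) y)
        < \<epsilon> * exp (- \<alpha> * real (nat \<lfloor>t\<rfloor>))"
      using close by (simp add: continuous_semiflow_funpow[OF semiflow])
    then have "0 < \<epsilon> * exp (- \<alpha> * real (nat \<lfloor>t\<rfloor>))" by (rule le_less_trans[OF zero_le_dist])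
    then have "0 < \<epsilon>" by (simp add: zero_less_mult_iff)
    have "dist (\<phi> t x) (\<phi> t y) \<le> L * dist (\<phi> (real (nat \<lfloor>t\<rfloor>)) x) (\<phi> (real (nat \<lfloor>t\<rfloor>)) y)"
      using t x \<open>y \<in> K\<close> by (intro dist_le_floor_time) auto
    also have "\<dots> < L * (\<epsilon> * exp (- \<alpha> * real (nat \<lfloor>t\<rfloor>)))"
      using d L_pos by simp
    also have "\<dots> \<le> L * (\<epsilon> * (exp \<alpha> * exp (- \<alpha> * t)))"
      using \<open>0 < \<epsilon>\<close> t L_pos \<open>0 \<le> \<alpha>\<close> by (intro mult_left_mono exp_rate_floor_le) auto
    finally show "dist (\<phi> t x) (\<phi> t y) < L * exp \<alpha> * \<epsilon> * exp (- \<alpha> * t)"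
      by (simp add: algebra_simps)
  qed
qed

lemma s_est_cont_le_disc:
  assumes "\<epsilon> > 0" "0 \<le> \<alpha>"
  shows "s_est_cont \<phi> T (L * exp \<alpha> * \<epsilon>) \<alpha> K \<le> s_est_disc (\<phi> 1) (nat \<lfloor>T\<rfloor>) \<epsilon> \<alpha> K"
  unfolding s_est_disc_def s_est_cont_def using assms
  by (intro Inf_card_mono est_spanning_disc_imp_cont est_spanning_disc_finite_exists compact
      continuous_semiflow_continuous_on[OF semiflow]) auto

lemma s_est_disc_le_cont:
  assumes \<epsilon>: "\<epsilon> > 0" and "0 \<le> \<alpha>" and nT: "real n \<le> T"
  shows "s_est_disc (\<phi> 1) n \<epsilon> \<alpha> K \<le> s_est_cont \<phi> T \<epsilon> \<alpha> K"
proof -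
  define C where "C = L * exp \<alpha>"
  have C: "C > 0" using L_pos by (simp add: C_def)
  \<comment> \<open>\<open>Inf {}\<close> is \<open>0\<close> on \<open>nat\<close>, so a finite continuous-time spanning set must be exhibited.\<close>
  have "\<epsilon> / C > 0" using \<epsilon> C by simp
  then obtain S where "finite S" "est_spanning_disc (\<phi> 1) (nat \<lfloor>T\<rfloor>) (\<epsilon> / C) \<alpha> K S"
    using est_spanning_disc_finite_exists[OF continuous_semiflow_continuous_on[OF semiflow zero_le_one]
        compact] by blast
  moreover from this(2) have "est_spanning_cont \<phi> T (L * exp \<alpha> * (\<epsilon> / C)) \<alpha> K S"
    by (rule est_spanning_disc_imp_cont[OF _ \<open>0 \<le> \<alpha>\<close>])
  then have "est_spanning_cont \<phi> T \<epsilon> \<alpha> K S"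
    using L_pos by (simp add: C_def)
  ultimately show ?thesis unfolding s_est_disc_def s_est_cont_def
    by (intro Inf_card_mono est_spanning_cont_imp_disc[OF semiflow _ nT]) auto
qed

lemma ln2_mult_est_rate_disc_le_cont:
  assumes "\<epsilon> > 0" "0 \<le> \<alpha>"
  shows "ereal (ln 2) * est_rate_disc (\<phi> 1) \<alpha> K \<epsilon> \<le> est_rate_cont \<phi> \<alpha> K \<epsilon>"
proof -
  have "ereal (ln 2) * est_rate_disc (\<phi> 1) \<alpha> K \<epsilon>
      = Limsup sequentially (\<lambda>T. ereal ((1 / real T) * ln (real (s_est_disc (\<phi> 1) T \<epsilon> \<alpha> K))))"
    unfolding est_rate_disc_def by (rule Limsup_ln_eq_ln2_mult_Limsup_log2[symmetric]) simp
  also have "\<dots> \<le> Limsup sequentially (\<lambda>T. ereal ((1 / real T) * ln (real (s_est_cont \<phi> (real T) \<epsilon> \<alpha> K))))"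
    using assms by (intro Limsup_mono always_eventually allI ereal_less_eq(3)[THEN iffD2]
        mult_left_mono ln_of_nat_mono s_est_disc_le_cont) auto
  also have "\<dots> \<le> est_rate_cont \<phi> \<alpha> K \<epsilon>"
    unfolding est_rate_cont_def by (rule Limsup_compose_filterlim_le[OF filterlim_real_sequentially])
  finally show ?thesis .
qed

lemma est_rate_cont_le_ln2_mult_disc:
  assumes "\<epsilon> > 0" "0 \<le> \<alpha>"
  shows "est_rate_cont \<phi> \<alpha> K (L * exp \<alpha> * \<epsilon>) \<le> ereal (ln 2) * est_rate_disc (\<phi> 1) \<alpha> K \<epsilon>"
proof -
  let ?d = "\<lambda>n. ereal ((1 / real n) * ln (real (s_est_disc (\<phi> 1) n \<epsilon> \<alpha> K)))"
  have "est_rate_cont \<phi> \<alpha> K (L * exp \<alpha> * \<epsilon>) \<le> Limsup at_top (\<lambda>T::real. ?d (nat \<lfloor>T\<rfloor>))"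
    unfolding est_rate_cont_def
  proof (rule Limsup_mono, rule eventually_mono[OF eventually_ge_at_top[of "1::real"]])
    fix T :: real assume T: "1 \<le> T"
    define n where "n = nat \<lfloor>T\<rfloor>"
    have n: "1 \<le> real n" "real n \<le> T" using T unfolding n_def by (auto simp: le_nat_floor)
    have "1 / T * ln (real (s_est_cont \<phi> T (L * exp \<alpha> * \<epsilon>) \<alpha> K)) \<le> 1 / T * ln (real (s_est_disc (\<phi> 1) n \<epsilon> \<alpha> K))"
      unfolding n_def using T assms by (intro mult_left_mono ln_of_nat_mono s_est_cont_le_disc) auto
    also have "\<dots> \<le> 1 / real n * ln (real (s_est_disc (\<phi> 1) n \<epsilon> \<alpha> K))"
      using n by (intro mult_right_mono divide_left_mono) (auto simp: ln_of_nat_nonneg)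
    finally show "ereal (1 / T * ln (real (s_est_cont \<phi> T (L * exp \<alpha> * \<epsilon>) \<alpha> K))) \<le> ?d (nat \<lfloor>T\<rfloor>)"
      unfolding n_def by simp
  qed
  also have "\<dots> \<le> Limsup sequentially ?d"
    by (rule Limsup_compose_filterlim_le[OF filterlim_compose[OF filterlim_nat_sequentially
          filterlim_floor_sequentially]])
  also have "\<dots> = ereal (ln 2) * est_rate_disc (\<phi> 1) \<alpha> K \<epsilon>"
    unfolding est_rate_disc_def by (rule Limsup_ln_eq_ln2_mult_Limsup_log2) simp
  finally show ?thesis .
qed

end

theorem mainTheorem3:
  fixes \<phi> :: "real \<Rightarrow> 'a::metric_space \<Rightarrow> 'a" and K :: "'a set" and \<alpha> L :: real
  assumes "continuous_semiflow \<phi>"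
    and "compact K"
    and "\<alpha> \<ge> 0"
    and "L > 0"
    and "\<forall>x\<in>(\<Union>s\<in>{0..}. \<phi> s ` K). \<forall>y\<in>(\<Union>s\<in>{0..}. \<phi> s ` K). \<forall>t\<in>{0..1}.
           dist (\<phi> t x) (\<phi> t y) \<le> L * dist x y"
  shows "h_est_cont \<alpha> K \<phi> = ereal (ln 2) * h_est_disc \<alpha> K (\<phi> 1)"
proof -
  interpret lipschitz_semiflow_on_orbit \<phi> K L using assms by unfold_locales
  let ?b = "est_rate_disc (\<phi> 1) \<alpha> K" and ?l = "SUP \<epsilon>\<in>{0<..}. est_rate_disc (\<phi> 1) \<alpha> K \<epsilon>"
  have b: "(?b \<longlongrightarrow> ?l) (at_right 0)"
    using assms(2) by (intro tendsto_at_right_antimono_SUP est_rate_disc_antimono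
        continuous_semiflow_continuous_on[OF semiflow]) auto
  have "(est_rate_cont \<phi> \<alpha> K \<longlongrightarrow> ereal (ln 2) * ?l) (at_right 0)"
  proof (rule tendsto_at_right_0_rescaled_sandwich[where C = "L * exp \<alpha>"])
    fix \<epsilon> :: real assume "0 < \<epsilon>"
    then show "ereal (ln 2) * ?b \<epsilon> \<le> est_rate_cont \<phi> \<alpha> K \<epsilon>"
      using assms(3) by (rule ln2_mult_est_rate_disc_le_cont)
    show "est_rate_cont \<phi> \<alpha> K \<epsilon> \<le> ereal (ln 2) * ?b (\<epsilon> / (L * exp \<alpha>))"
      using est_rate_cont_le_ln2_mult_disc[where \<epsilon> = "\<epsilon> / (L * exp \<alpha>)" and \<alpha> = \<alpha>] \<open>0 < \<epsilon>\<close> assms(3,4)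
      by simp
  qed (use b assms(4) in auto)
  then have "h_est_cont \<alpha> K \<phi> = ereal (ln 2) * ?l"
    unfolding h_est_cont_def est_rate_cont_def[abs_def] by (intro tendsto_Lim) simp_all
  moreover have "h_est_disc \<alpha> K (\<phi> 1) = ?l"
    using b unfolding h_est_disc_def est_rate_disc_def[abs_def] by (intro tendsto_Lim) simp_all
  ultimately show ?thesis by simp
qed

end
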